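(* Let $\mathcal{L}$ be a square lattice, let $\beta$ be a maximal element of $J(\mathcal{L})$, and let $\alpha \in \mathcal{L}_\beta$. Then \[ |E_\alpha \setminus E_\alpha(\mathcal{L}_\beta)| = |E_\alpha| - |E_\alpha(\mathcal{L}_\beta)| \geq |\mathcal{L}| - |\mathcal{L}_\beta| - 1. \]
   Context: All lattices are finite distributive. $x \in \mathcal{L}$ is join-irreducible if $x = y\vee z$ implies $x=y$ or $x=z$ (so the minimum, the root, is join-irreducible); $J(\mathcal{L})$ is the poset of join-irreducibles. $\mathcal{L}$ is a tree lattice if the Hasse diagram of $J(\mathcal{L})$ is a tree; a square lattice is a tree lattice in which every vertex of this Hasse diagram other than the root has degree at most two. For a maximal $\beta \in J(\mathcal{L})$, the pruning $\mathcal{L}_\beta$ is the lattice of hereditary subsets of $J(\mathcal{L})\setminus\{\beta\}$, identified (via Birkhoff's theorem) with the sublattice $\{\gamma \in \mathcal{L} : \gamma \not\geq \beta\}$ of $\mathcal{L}$. A diamond in a lattice $\mathcal{M}$ is a set $\{x, y, x\vee y, x\wedge y\}$ with $x, y \in \mathcal{M}$ non-comparable. For $\alpha \in \mathcal{M}$, $E_\alpha(\mathcal{M}) = \{(\alpha,\gamma) : \text{some diamond of } \mathcal{M} \text{ contains both } \alpha \text{ and } \gamma\}$, and $E_\alpha = E_\alpha(\mathcal{L})$. *)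

theory Defs
  imports Main
begin

text \<open>The finite distributive lattice L is the universe of a type of class
  finite and distributive_lattice.\<close>

definition join_irr :: "'a::lattice \<Rightarrow> bool" where
  "join_irr x \<longleftrightarrow> (\<forall>y z. x = sup y z \<longrightarrow> x = y \<or> x = z)"

definition JI :: "'a::lattice set" where
  "JI = {x. join_irr x}"

definition hasse_cover :: "'a::lattice \<Rightarrow> 'a \<Rightarrow> bool" where
  "hasse_cover x y \<longleftrightarrow> x \<in> JI \<and> y \<in> JI \<and> x < y \<and> \<not> (\<exists>z\<in>JI. x < z \<and> z < y)"

definition hasse_adj :: "'a::lattice \<Rightarrow> 'a \<Rightarrow> bool" where
  "hasse_adj x y \<longleftrightarrow> hasse_cover x y \<or> hasse_cover y x"

definition hasse_connected :: "'a::lattice itself \<Rightarrow> bool" where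
  "hasse_connected _ \<longleftrightarrow>
     (\<forall>x\<in>(JI::'a set). \<forall>y\<in>JI. (x, y) \<in> {(u, v). hasse_adj u v}\<^sup>*)"

definition is_hasse_cycle :: "'a::lattice list \<Rightarrow> bool" where
  "is_hasse_cycle vs \<longleftrightarrow> length vs \<ge> 3 \<and> distinct vs \<and> set vs \<subseteq> JI \<and>
     (\<forall>i. Suc i < length vs \<longrightarrow> hasse_adj (vs ! i) (vs ! Suc i)) \<and>
     hasse_adj (last vs) (hd vs)"

definition tree_lattice :: "'a::lattice itself \<Rightarrow> bool" where
  "tree_lattice T \<longleftrightarrow> hasse_connected T \<and> \<not> (\<exists>vs::'a list. is_hasse_cycle vs)"

definition hasse_degree :: "'a::{finite,lattice} \<Rightarrow> nat" where
  "hasse_degree v = card {u \<in> JI. hasse_adj u v}"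

text \<open>Square lattice: tree lattice where each vertex other than the root
  (the minimum of J(L), i.e. each non-minimal vertex) has degree at most 2.\<close>
definition square_lattice :: "'a::{finite,lattice} itself \<Rightarrow> bool" where
  "square_lattice T \<longleftrightarrow> tree_lattice T \<and>
     (\<forall>v\<in>(JI::'a set). (\<exists>u\<in>JI. u < v) \<longrightarrow> hasse_degree v \<le> 2)"

definition pruning :: "'a::lattice \<Rightarrow> 'a set" where
  "pruning \<beta> = {\<gamma>. \<not> \<beta> \<le> \<gamma>}"

definition diamond_edges :: "'a::lattice \<Rightarrow> 'a set \<Rightarrow> ('a \<times> 'a) set" where
  "diamond_edges \<alpha> M = {(a, g). a = \<alpha> \<and>
     (\<exists>x\<in>M. \<exists>y\<in>M. \<not> x \<le> y \<and> \<not> y \<le> x \<and>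
        \<alpha> \<in> {x, y, sup x y, inf x y} \<and> g \<in> {x, y, sup x y, inf x y})}"

end

theory Submission
  imports Defs
begin

text \<open>Put \<open>\<delta> = \<alpha> \<squnion> \<beta>\<close>. Every \<open>\<gamma> \<ge> \<beta>\<close> lies outside the sublattice \<open>\<L>\<^sub>\<beta>\<close>, so no diamond
  of \<open>\<L>\<^sub>\<beta>\<close> contains it; it suffices to show that each such \<open>\<gamma> \<noteq> \<delta>\<close> shares a diamond
  with \<open>\<alpha>\<close> in \<open>\<L>\<close>. If \<open>\<alpha> \<not>\<le> \<gamma>\<close>, then \<open>\<alpha>, \<gamma>\<close> are incomparable. Otherwise \<open>\<alpha> \<le> \<delta> < \<gamma>\<close>,
  and \<open>\<delta>\<close> has a relative complement \<open>Y\<close> in \<open>[\<alpha>, \<gamma>]\<close>, giving the diamond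
  \<open>{\<delta>, Y, \<gamma>, \<alpha>}\<close>. The complement exists because in a square lattice the join-irreducibles
  above a non-root join-irreducible form a chain, so no join-irreducible outside \<open>\<delta>\<close>
  meets \<open>\<delta>\<close> above \<open>\<alpha>\<close>.\<close>

lemma finite_lattice_has_least: "\<exists>m::'a::{finite,lattice}. \<forall>x. m \<le> x"
proof -
  obtain m :: 'a where m: "\<forall>b. b \<le> m \<longrightarrow> m = b"
    using finite_has_minimal[of "UNIV::'a set"] by auto
  have "m \<le> x" for x
    using m[rule_format, of "inf m x"] by (metis inf.absorb_iff1 inf_le1)
  thus ?thesis by blast
qed

lemma least_in_JI:
  assumes "\<forall>x. m \<le> x"
  shows "m \<in> JI"
  unfolding JI_def join_irr_def
proof (intro CollectI allI impI)
  fix y z assume "m = sup y z"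
  hence "y \<le> m" by simp
  thus "m = y \<or> m = z" using assms order.antisym by blast
qed

lemma exists_JI_le_not_le:
  fixes x y :: "'a::{finite,lattice}"
  assumes "\<not> x \<le> y"
  shows "\<exists>j\<in>JI. j \<le> x \<and> \<not> j \<le> y"
proof -
  let ?A = "{z. z \<le> x \<and> \<not> z \<le> y}"
  obtain z where z: "z \<in> ?A" and zm: "\<forall>b\<in>?A. b \<le> z \<longrightarrow> z = b"
    using finite_has_minimal[of ?A] assms by auto
  have "join_irr z"
    unfolding join_irr_def
  proof (intro allI impI)
    fix a b assume ab: "z = sup a b"
    show "z = a \<or> z = b"
    proof (rule ccontr)
      assume "\<not> (z = a \<or> z = b)"
      moreover have "a \<le> z" "b \<le> z" using ab by auto
      ultimately have "a \<le> y" "b \<le> y" using zm z by (auto intro: order_trans)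
      thus False using z ab by auto
    qed
  qed
  thus ?thesis using z unfolding JI_def by auto
qed

lemma JI_le_supD:
  fixes j x y :: "'a::distrib_lattice"
  assumes "j \<in> JI" "j \<le> sup x y"
  shows "j \<le> x \<or> j \<le> y"
proof -
  have "j = sup (inf j x) (inf j y)"
    using assms(2) by (metis inf.absorb1 inf_sup_distrib1)
  hence "j = inf j x \<or> j = inf j y" using assms(1) unfolding JI_def join_irr_def by blast
  thus ?thesis by (metis inf.absorb_iff1)
qed

lemma pruning_closed:
  fixes \<beta> :: "'a::distrib_lattice"
  assumes "\<beta> \<in> JI" "x \<in> pruning \<beta>" "y \<in> pruning \<beta>"
  shows "sup x y \<in> pruning \<beta>" "inf x y \<in> pruning \<beta>"
  using assms JI_le_supD[OF assms(1), of x y] unfolding pruning_def by (auto intro: order_trans)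

lemma exists_hasse_cover_below:
  fixes u c :: "'a::{finite,lattice}"
  assumes "u \<in> JI" "c \<in> JI" "u < c"
  shows "\<exists>l. hasse_cover l c"
proof -
  let ?L = "{z\<in>JI. z < c}"
  have "u \<in> ?L" using assms(1,3) by simp
  obtain l where l: "l \<in> ?L" and l_max: "\<forall>b\<in>?L. l \<le> b \<longrightarrow> l = b"
    using finite_has_maximal2[of ?L u] \<open>u \<in> ?L\<close> by auto
  have "hasse_cover l c"
    unfolding hasse_cover_def using l l_max assms(2) by (auto simp: less_le_not_le)
  thus ?thesis ..
qed

lemma exists_hasse_cover_above:
  fixes c k :: "'a::{finite,lattice}"
  assumes "c \<in> JI" "k \<in> JI" "c < k"
  shows "\<exists>u. hasse_cover c u \<and> u \<le> k"
proof -
  let ?U = "{z\<in>JI. c < z \<and> z \<le> k}"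
  have "k \<in> ?U" using assms(2,3) by simp
  obtain u where u: "u \<in> ?U" and u_min: "\<forall>b\<in>?U. b \<le> u \<longrightarrow> u = b"
    using finite_has_minimal2[of ?U k] \<open>k \<in> ?U\<close> by auto
  have "hasse_cover c u"
    unfolding hasse_cover_def using u u_min assms(1) by (auto simp: less_le_not_le intro: order_trans)
  thus ?thesis using u by blast
qed

text \<open>A vertex \<open>c\<close> maximal among the common join-irreducible lower bounds of two incomparable
  \<open>k\<^sub>1, k\<^sub>2\<close> above \<open>i\<close> has a lower cover and two distinct upper covers, hence degree 3.\<close>

lemma square_lattice_JI_above_chain:
  fixes i u k1 k2 :: "'a::{finite,lattice}"
  assumes sq: "square_lattice TYPE('a)"
    and "i \<in> JI" "u \<in> JI" "u < i" "k1 \<in> JI" "k2 \<in> JI" "i \<le> k1" "i \<le> k2"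
  shows "k1 \<le> k2 \<or> k2 \<le> k1"
proof (rule ccontr)
  assume incomparable: "\<not> (k1 \<le> k2 \<or> k2 \<le> k1)"
  let ?C = "{c\<in>JI. i \<le> c \<and> c \<le> k1 \<and> c \<le> k2}"
  have "i \<in> ?C" using assms(2,7,8) by simp
  then obtain c where c: "c \<in> ?C" and c_max: "\<forall>b\<in>?C. c \<le> b \<longrightarrow> c = b"
    using finite_has_maximal2[of ?C i] by auto
  have "c < k1" "c < k2" using c incomparable by (auto simp: less_le)
  obtain l where l: "hasse_cover l c"
    using exists_hasse_cover_below[of u c] assms(3,4) c by (auto intro: less_le_trans)
  obtain u1 where u1: "hasse_cover c u1" "u1 \<le> k1"
    using exists_hasse_cover_above[of c k1] \<open>c < k1\<close> assms(5) c by blast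
  obtain u2 where u2: "hasse_cover c u2" "u2 \<le> k2"
    using exists_hasse_cover_above[of c k2] \<open>c < k2\<close> assms(6) c by blast
  have "u1 \<noteq> u2"
  proof
    assume "u1 = u2"
    hence "u1 \<in> ?C" using u1 u2 c unfolding hasse_cover_def by auto
    thus False using c_max u1 unfolding hasse_cover_def by auto
  qed
  moreover have "l < c" "c < u1" "c < u2" using l u1 u2 unfolding hasse_cover_def by auto
  ultimately have "card {l, u1, u2} = 3" by (auto simp: card_insert_if)
  moreover have "{l, u1, u2} \<subseteq> {v \<in> JI. hasse_adj v c}"
    using l u1 u2 unfolding hasse_adj_def hasse_cover_def by auto
  ultimately have "3 \<le> hasse_degree c"
    unfolding hasse_degree_def by (metis card_mono finite)
  moreover have "hasse_degree c \<le> 2"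
    using sq c l unfolding square_lattice_def hasse_cover_def by auto
  ultimately show False by simp
qed

lemma square_lattice_inf_JI_le:
  fixes \<alpha> \<beta> j :: "'a::{finite,distrib_lattice}"
  assumes sq: "square_lattice TYPE('a)"
    and \<beta>: "\<beta> \<in> JI" "\<forall>x\<in>JI. \<beta> \<le> x \<longrightarrow> x = \<beta>"
    and j: "j \<in> JI" "\<not> j \<le> sup \<alpha> \<beta>"
  shows "inf j (sup \<alpha> \<beta>) \<le> \<alpha>"
proof (rule ccontr)
  assume "\<not> inf j (sup \<alpha> \<beta>) \<le> \<alpha>"
  then obtain i where i: "i \<in> JI" "i \<le> inf j (sup \<alpha> \<beta>)" "\<not> i \<le> \<alpha>"
    using exists_JI_le_not_le by blast
  hence "i \<le> \<beta>" using JI_le_supD[OF i(1), of \<alpha> \<beta>] by auto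
  obtain m :: 'a where m: "\<forall>x. m \<le> x" using finite_lattice_has_least by blast
  have "m < i" using m i by (metis less_le)
  have "j \<le> \<beta> \<or> \<beta> \<le> j"
    using square_lattice_JI_above_chain[OF sq i(1) least_in_JI[OF m] \<open>m < i\<close> j(1) \<beta>(1)]
      i \<open>i \<le> \<beta>\<close> by auto
  hence "j \<le> \<beta>" using \<beta>(2) j(1) by auto
  thus False using j(2) by (meson order_trans sup_ge2)
qed

lemma diamond_edges_mono: "M \<subseteq> N \<Longrightarrow> diamond_edges \<alpha> M \<subseteq> diamond_edges \<alpha> N"
  unfolding diamond_edges_def by blast

lemma diamond_edgesI:
  "x \<in> M \<Longrightarrow> y \<in> M \<Longrightarrow> \<not> x \<le> y \<Longrightarrow> \<not> y \<le> x \<Longrightarrow> \<alpha> \<in> {x, y, sup x y, inf x y}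
   \<Longrightarrow> g \<in> {x, y, sup x y, inf x y} \<Longrightarrow> (\<alpha>, g) \<in> diamond_edges \<alpha> M"
  unfolding diamond_edges_def by blast

lemma diamond_edges_snd_mem:
  assumes "\<And>x y. x \<in> M \<Longrightarrow> y \<in> M \<Longrightarrow> sup x y \<in> M \<and> inf x y \<in> M"
    and "(a, g) \<in> diamond_edges \<alpha> M"
  shows "g \<in> M"
  using assms unfolding diamond_edges_def by blast

text \<open>Take \<open>Y\<close> maximal in \<open>[\<alpha>, g]\<close> with \<open>Y \<sqinter> \<delta> = \<alpha>\<close>. A join-irreducible \<open>j \<le> g\<close> missing
  \<open>Y \<squnion> \<delta>\<close> could be added to \<open>Y\<close>, by distributivity and the hypothesis on \<open>j \<sqinter> \<delta>\<close>.\<close>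

lemma exists_relative_complement:
  fixes \<alpha> \<delta> g :: "'a::{finite,distrib_lattice}"
  assumes "\<alpha> \<le> \<delta>" "\<delta> \<le> g"
    and JI_meet: "\<And>j. j \<in> JI \<Longrightarrow> \<not> j \<le> \<delta> \<Longrightarrow> inf j \<delta> \<le> \<alpha>"
  shows "\<exists>Y. \<alpha> \<le> Y \<and> inf Y \<delta> = \<alpha> \<and> sup Y \<delta> = g"
proof -
  let ?Y = "{y. \<alpha> \<le> y \<and> y \<le> g \<and> inf y \<delta> = \<alpha>}"
  have "\<alpha> \<in> ?Y" using assms(1,2) by (simp add: inf.absorb1)
  then obtain Y where Y: "Y \<in> ?Y" and Y_max: "\<forall>b\<in>?Y. Y \<le> b \<longrightarrow> Y = b"
    using finite_has_maximal2[of ?Y \<alpha>] by auto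
  have "g \<le> sup Y \<delta>"
  proof (rule ccontr)
    assume "\<not> g \<le> sup Y \<delta>"
    then obtain j where j: "j \<in> JI" "j \<le> g" "\<not> j \<le> sup Y \<delta>"
      using exists_JI_le_not_le by blast
    have "\<not> j \<le> \<delta>" using j(3) by (meson order_trans sup_ge2)
    have "inf (sup Y j) \<delta> = sup (inf Y \<delta>) (inf j \<delta>)" by (rule inf_sup_distrib2)
    also have "\<dots> = \<alpha>" using Y JI_meet[OF j(1) \<open>\<not> j \<le> \<delta>\<close>] by (simp add: sup.absorb1)
    finally have "sup Y j \<in> ?Y" using Y j by (auto intro: le_supI1)
    hence "Y = sup Y j" using Y_max by simp
    thus False using j(3) by (metis le_supI1 sup_ge2)
  qed
  hence "sup Y \<delta> = g" using Y assms(2) by (auto intro: order.antisym)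
  thus ?thesis using Y by blast
qed

lemma diamond_edge_above_maximal_JI:
  fixes \<alpha> \<beta> g :: "'a::{finite,distrib_lattice}"
  assumes sq: "square_lattice TYPE('a)"
    and \<beta>: "\<beta> \<in> JI" "\<forall>x\<in>JI. \<beta> \<le> x \<longrightarrow> x = \<beta>"
    and "\<not> \<beta> \<le> \<alpha>" "\<beta> \<le> g" "g \<noteq> sup \<alpha> \<beta>"
  shows "(\<alpha>, g) \<in> diamond_edges \<alpha> UNIV"
proof (cases "\<alpha> \<le> g")
  case False
  moreover have "\<not> g \<le> \<alpha>" using assms(4,5) order_trans by blast
  ultimately show ?thesis by (intro diamond_edgesI) auto
next
  case True
  let ?\<delta> = "sup \<alpha> \<beta>"
  obtain Y where Y: "\<alpha> \<le> Y" "inf Y ?\<delta> = \<alpha>" "sup Y ?\<delta> = g"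
    using exists_relative_complement[of \<alpha> ?\<delta> g] square_lattice_inf_JI_le[OF sq \<beta>]
      True assms(5) by auto
  have "\<not> ?\<delta> \<le> Y" using Y(2) assms(4) by (metis inf.absorb2 sup_ge2)
  moreover have "\<not> Y \<le> ?\<delta>" using Y(3) assms(6) by (metis sup.absorb2)
  moreover have "inf ?\<delta> Y = \<alpha>" "sup ?\<delta> Y = g" using Y(2,3) by (simp_all add: ac_simps)
  ultimately show ?thesis by (intro diamond_edgesI[of ?\<delta> UNIV Y]) auto
qed

lemma diamond_edge_outside_pruning:
  fixes \<alpha> \<beta> g :: "'a::{finite,distrib_lattice}"
  assumes "square_lattice TYPE('a)"
    and "\<beta> \<in> JI" "\<forall>x\<in>JI. \<beta> \<le> x \<longrightarrow> x = \<beta>"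
    and "\<alpha> \<in> pruning \<beta>" "g \<notin> pruning \<beta>" "g \<noteq> sup \<alpha> \<beta>"
  shows "(\<alpha>, g) \<in> diamond_edges \<alpha> UNIV - diamond_edges \<alpha> (pruning \<beta>)"
proof
  show "(\<alpha>, g) \<in> diamond_edges \<alpha> UNIV"
    using diamond_edge_above_maximal_JI[OF assms(1-3)] assms(4-6) unfolding pruning_def by simp
  show "(\<alpha>, g) \<notin> diamond_edges \<alpha> (pruning \<beta>)"
    using diamond_edges_snd_mem[of "pruning \<beta>"] pruning_closed[OF assms(2)] assms(5) by blast
qed

theorem mainTheorem9:
  fixes \<beta> \<alpha> :: "'a::{finite,distrib_lattice}"
  assumes "square_lattice TYPE('a)"
    and "\<beta> \<in> JI" and "\<forall>x\<in>JI. \<beta> \<le> x \<longrightarrow> x = \<beta>"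
    and "\<alpha> \<in> pruning \<beta>"
  shows "int (card (diamond_edges \<alpha> UNIV - diamond_edges \<alpha> (pruning \<beta>)))
           = int (card (diamond_edges \<alpha> UNIV)) - int (card (diamond_edges \<alpha> (pruning \<beta>)))
       \<and> int (card (diamond_edges \<alpha> UNIV)) - int (card (diamond_edges \<alpha> (pruning \<beta>)))
           \<ge> int (card (UNIV :: 'a set)) - int (card (pruning \<beta>)) - 1"
proof -
  let ?E = "diamond_edges \<alpha> (UNIV::'a set)" and ?E' = "diamond_edges \<alpha> (pruning \<beta>)"
  have sub: "?E' \<subseteq> ?E" by (rule diamond_edges_mono) simp
  have new_edges: "Pair \<alpha> ` (- pruning \<beta> - {sup \<alpha> \<beta>}) \<subseteq> ?E - ?E'"
    using diamond_edge_outside_pruning[OF assms] by blast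
  have "card (UNIV::'a set) - card (pruning \<beta>) = card (- pruning \<beta>)"
    by (simp add: Compl_eq_Diff_UNIV card_Diff_subset)
  also have "\<dots> - 1 \<le> card (- pruning \<beta> - {sup \<alpha> \<beta>})"
    using diff_card_le_card_Diff[of "{sup \<alpha> \<beta>}" "- pruning \<beta>"] by simp
  also have "\<dots> = card (Pair \<alpha> ` (- pruning \<beta> - {sup \<alpha> \<beta>}))"
    by (rule card_image[symmetric]) (simp add: inj_on_def)
  also have "\<dots> \<le> card (?E - ?E')"
    by (rule card_mono[OF _ new_edges]) simp
  finally show ?thesis
    using card_Diff_subset[OF _ sub] card_mono[OF _ sub] by simp
qed

end
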